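(* Consider the $T$-round online first-price auction problem and the AR-OMD policy described in the context, with a suitable choice of its learning rate $\eta>0$ and grid precision $\epsilon$ (depending only on $T$), and assume the switching budget satisfies $L_T=o(T)$ and is unknown to the learner. Then \[ \sup_{(v_t,m_t)_{t=1}^T\in\mathcal{L}}\mathbb{E}[\mathrm{DR}_T(\pi)]=\tilde{O}(L_T). \]
   Context: Online first-price auction over $T$ rounds: at each round $t$ the learner observes a private value $v_t\in[0,1]$, submits a bid $b_t\in[0,1]$ (possibly randomized, depending only on past $(v_s,m_s)_{s<t}$ and $v_t$), then observes $m_t\in[0,1]$, the highest bid of the other bidders, and receives reward $r(b_t;v_t,m_t)$ with $r(b;v,m)\coloneqq(v-b)\mathbbm{1}(b\ge m)$. The expected dynamic regret is $\mathbb{E}[\mathrm{DR}_T(\pi)]\coloneqq\sum_{t=1}^T\max\{v_t-m_t,0\}-\sum_{t=1}^T\mathbb{E}[r(b_t;v_t,m_t)]$. For $L_T\ge0$, $\mathcal{L}\coloneqq\{(v_t,m_t)_{t=1}^T\in[0,1]^{2T}:\sum_{t=2}^T\mathbbm{1}(m_t\ne m_{t-1})\le L_T\}$. $\tilde{O}(\cdot)$ hides polylogarithmic factors in $T$. AR-OMD policy: there are $N=1/\epsilon$ experts, expert $i$ bidding $\min\{v_t,i\epsilon\}$ with reward $r_{t,i}\coloneqq r(\min\{v_t,i\epsilon\};v_t,m_t)$. Time is split into consecutive batches; a new batch begins at round $t+1$ whenever at a round $t$ which is not the first round of its batch one observes $m_t\ne m_{t-1}$. In round $t$ of a batch starting at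 round $t_0$, the learner bids $\min\{v_t,i\epsilon\}$ with probability $p_{t,i}\propto\exp\left(\eta\left(\sum_{s=t_0}^{t-1}r_{s,i}+o_{t,i}\right)\right)$, where the optimism is $o_{t,i}\coloneqq r(\min\{v_t,i\epsilon\};v_t,m_{t-1})$ (with $m_0\in[0,1]$ an arbitrary fixed value). This is optimistic mirror descent on the probability simplex with negative-entropy regularizer $\frac1\eta\sum_ip_i\ln p_i$, restarted at each batch. *)

theory Defs
  imports Complex_Main "HOL-Library.Landau_Symbols"
begin

definition fpa_reward :: "real \<Rightarrow> real \<Rightarrow> real \<Rightarrow> real" where
  "fpa_reward b v m = (if b \<ge> m then v - b else 0)"

text \<open>Expert i (1 \<le> i \<le> N, grid precision 1/N) bids min v (i/N).\<close>
definition expert_bid :: "nat \<Rightarrow> real \<Rightarrow> nat \<Rightarrow> real" where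
  "expert_bid N v i = min v (real i / real N)"

text \<open>First round of the batch containing round t (rounds are 1..T; index 0 of m
  holds the fixed initial value m_0).\<close>
primrec batch_start :: "(nat \<Rightarrow> real) \<Rightarrow> nat \<Rightarrow> nat" where
  "batch_start m 0 = 1"
| "batch_start m (Suc t) =
     (if 1 \<le> t \<and> t \<noteq> batch_start m t \<and> m t \<noteq> m (t - 1) then Suc t else batch_start m t)"

definition aromd_weight ::
  "nat \<Rightarrow> real \<Rightarrow> (nat \<Rightarrow> real) \<Rightarrow> (nat \<Rightarrow> real) \<Rightarrow> nat \<Rightarrow> nat \<Rightarrow> real" where
  "aromd_weight N \<eta> v m t i =
     exp (\<eta> * ((\<Sum>s\<in>{batch_start m t..<t}. fpa_reward (expert_bid N (v s) i) (v s) (m s))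
              + fpa_reward (expert_bid N (v t) i) (v t) (m (t - 1))))"

definition aromd_prob ::
  "nat \<Rightarrow> real \<Rightarrow> (nat \<Rightarrow> real) \<Rightarrow> (nat \<Rightarrow> real) \<Rightarrow> nat \<Rightarrow> nat \<Rightarrow> real" where
  "aromd_prob N \<eta> v m t i =
     aromd_weight N \<eta> v m t i / (\<Sum>j\<in>{1..N}. aromd_weight N \<eta> v m t j)"

definition aromd_exp_reward ::
  "nat \<Rightarrow> real \<Rightarrow> (nat \<Rightarrow> real) \<Rightarrow> (nat \<Rightarrow> real) \<Rightarrow> nat \<Rightarrow> real" where
  "aromd_exp_reward N \<eta> v m t =
     (\<Sum>i\<in>{1..N}. aromd_prob N \<eta> v m t i * fpa_reward (expert_bid N (v t) i) (v t) (m t))"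

definition aromd_dyn_regret ::
  "nat \<Rightarrow> real \<Rightarrow> nat \<Rightarrow> (nat \<Rightarrow> real) \<Rightarrow> (nat \<Rightarrow> real) \<Rightarrow> real" where
  "aromd_dyn_regret N \<eta> T v m =
     (\<Sum>t=1..T. max (v t - m t) 0) - (\<Sum>t=1..T. aromd_exp_reward N \<eta> v m t)"

definition num_switches :: "nat \<Rightarrow> (nat \<Rightarrow> real) \<Rightarrow> nat" where
  "num_switches T m = card {t\<in>{2..T}. m t \<noteq> m (t - 1)}"

definition in_switch_class :: "nat \<Rightarrow> real \<Rightarrow> (nat \<Rightarrow> real) \<Rightarrow> (nat \<Rightarrow> real) \<Rightarrow> bool" where
  "in_switch_class T L v m \<longleftrightarrow>
     (\<forall>t\<in>{1..T}. v t \<in> {0..1}) \<and> (\<forall>t\<in>{0..T}. m t \<in> {0..1}) \<and>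
     real (num_switches T m) \<le> L"

end

theory Submission
  imports Defs
begin

text \<open>Take \<open>\<eta> = 1\<close> and \<open>N = T\<close> grid experts. Within a batch the competing bid is a
  constant \<open>m\<close>, and the expert \<open>c\<close> bidding the first grid point above \<open>m\<close> earns at least
  \<open>max (v - m) 0 - 1/N\<close> in every round. With \<open>R t i\<close> the reward of expert \<open>i\<close> accumulated
  in the current batch up to round \<open>t\<close>, consider the potential
  \<open>\<Phi> t = ln (\<Sum>i. exp (R t i)) - R t c \<ge> 0\<close>. In a round that continues its batch with an
  unchanged \<open>m\<close>, the optimistic hint is the true reward vector, so the learner plays the
  softmax of \<open>R t\<close>, and convexity of log-sum-exp bounds its regret by \<open>1/N + \<Phi> (t-1) - \<Phi> t\<close>.
  Every other round costs at most \<open>2 + ln N\<close>, and there are at most \<open>1 + 2 L\<close> of them.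
  Telescoping from \<open>\<Phi> 0 = ln N\<close> bounds the regret by \<open>T/N + ln N + (2 + ln N) (1 + 2 L)\<close>.\<close>

lemma ln_sum_exp_ge:
  fixes f :: "'a \<Rightarrow> real"
  assumes "finite A" "i \<in> A"
  shows "f i \<le> ln (\<Sum>j\<in>A. exp (f j))"
proof -
  have "exp (f i) \<le> (\<Sum>j\<in>A. exp (f j))"
    using assms by (intro member_le_sum) auto
  then show ?thesis
    by (simp add: ln_ge_iff order.strict_trans2[OF exp_gt_zero])
qed

lemma ln_sum_exp_mono_add:
  fixes f g :: "'a \<Rightarrow> real"
  assumes "finite A" "A \<noteq> {}" "\<And>j. j \<in> A \<Longrightarrow> f j \<le> g j + c"
  shows "ln (\<Sum>j\<in>A. exp (f j)) \<le> ln (\<Sum>j\<in>A. exp (g j)) + c"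
proof -
  have pos: "0 < (\<Sum>j\<in>A. exp (h j))" for h :: "'a \<Rightarrow> real"
    using assms(1,2) by (intro sum_pos) auto
  have "(\<Sum>j\<in>A. exp (f j)) \<le> (\<Sum>j\<in>A. exp (g j)) * exp c"
    unfolding sum_distrib_right exp_add[symmetric] using assms(3) by (intro sum_mono) simp
  then have "ln (\<Sum>j\<in>A. exp (f j)) \<le> ln ((\<Sum>j\<in>A. exp (g j)) * exp c)"
    using pos by simp
  also have "\<dots> = ln (\<Sum>j\<in>A. exp (g j)) + c"
    using pos[of g] by (simp add: ln_mult)
  finally show ?thesis .
qed

lemma ln_sum_exp_sub_mean_le:
  fixes F r :: "'a \<Rightarrow> real"
  assumes "finite A" "A \<noteq> {}"
  shows "ln (\<Sum>j\<in>A. exp (F j)) - (\<Sum>i\<in>A. exp (F i) / (\<Sum>j\<in>A. exp (F j)) * r i)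
         \<le> ln (\<Sum>j\<in>A. exp (F j - r j))"
proof -
  define W where "W = (\<Sum>j\<in>A. exp (F j))"
  define \<mu> where "\<mu> = (\<Sum>i\<in>A. exp (F i) / W * r i)"
  have "0 < W"
    unfolding W_def using assms by (intro sum_pos) auto
  have "exp (F i) * exp (-\<mu>) * (1 + (\<mu> - r i)) \<le> exp (F i - r i)" for i
  proof -
    have "exp (F i) * exp (-\<mu>) * (1 + (\<mu> - r i)) \<le> exp (F i) * exp (-\<mu>) * exp (\<mu> - r i)"
      by (intro mult_left_mono exp_ge_add_one_self) simp
    then show ?thesis by (simp add: exp_add[symmetric])
  qed
  then have "(\<Sum>i\<in>A. exp (F i) * exp (-\<mu>) * (1 + (\<mu> - r i))) \<le> (\<Sum>j\<in>A. exp (F j - r j))"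
    by (intro sum_mono)
  moreover have "(\<Sum>i\<in>A. exp (F i) * exp (-\<mu>) * (1 + (\<mu> - r i))) = exp (-\<mu>) * W"
  proof -
    have "\<mu> * W = (\<Sum>i\<in>A. exp (F i) * r i)"
      unfolding \<mu>_def using \<open>0 < W\<close> by (simp add: sum_distrib_right)
    moreover have "(\<Sum>i\<in>A. exp (F i) * exp (-\<mu>) * (1 + (\<mu> - r i)))
        = exp (-\<mu>) * (W + \<mu> * W - (\<Sum>i\<in>A. exp (F i) * r i))"
      unfolding W_def
      by (simp add: algebra_simps sum.distrib sum_subtractf sum_distrib_left sum_distrib_right)
    ultimately show ?thesis by simp
  qed
  ultimately have "exp (-\<mu>) * W \<le> (\<Sum>j\<in>A. exp (F j - r j))"
    by simp
  then have "ln (exp (-\<mu>) * W) \<le> ln (\<Sum>j\<in>A. exp (F j - r j))"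
    using \<open>0 < W\<close> by (intro ln_mono) auto
  then show ?thesis
    using \<open>0 < W\<close> by (simp add: ln_mult W_def \<mu>_def)
qed

declare batch_start.simps(2) [simp del]

lemma batch_start_ge_1: "1 \<le> batch_start m t"
  by (induction t) (simp_all add: batch_start.simps)

lemma batch_start_le: "1 \<le> t \<Longrightarrow> batch_start m t \<le> t"
  by (induction t) (auto simp: batch_start.simps le_Suc_eq)

lemma batch_start_pred: "batch_start m t < t \<Longrightarrow> batch_start m (t - 1) = batch_start m t"
  by (cases t) (auto simp: batch_start.simps split: if_splits)

lemma batch_start_SucD:
  "batch_start m (Suc t) = Suc t \<Longrightarrow> 1 \<le> t \<Longrightarrow> batch_start m t < t \<and> m t \<noteq> m (t - 1)"
  using batch_start_le[of t m] by (auto simp: batch_start.simps split: if_splits)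

lemma batch_start_const:
  "batch_start m t \<le> s \<Longrightarrow> s < t \<Longrightarrow> m s = m (batch_start m t)"
proof (induction t arbitrary: s)
  case 0 then show ?case by simp
next
  case (Suc t)
  have bs: "batch_start m (Suc t) = batch_start m t"
    and no_restart: "t \<noteq> batch_start m t \<Longrightarrow> m t = m (t - 1)"
    using Suc.prems batch_start_ge_1[of m t] by (auto simp: batch_start.simps split: if_splits)
  show ?case
  proof (cases "s < t")
    case True
    with Suc.prems show ?thesis using Suc.IH[of s] by (simp add: bs)
  next
    case False
    with Suc.prems have "s = t" by simp
    show ?thesis
    proof (cases "t = batch_start m t")
      case False
      with Suc.prems \<open>s = t\<close> have "m (t - 1) = m (batch_start m t)"
        using Suc.IH[of "t - 1"] by (simp add: bs)
      with False show ?thesis by (simp add: \<open>s = t\<close> bs no_restart)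
    qed (simp add: \<open>s = t\<close> bs)
  qed
qed

definition switch_at :: "(nat \<Rightarrow> real) \<Rightarrow> nat \<Rightarrow> bool" where
  "switch_at m t \<longleftrightarrow> 2 \<le> t \<and> m t \<noteq> m (t - 1)"

text \<open>In a steady round the optimism \<open>o\<^sub>t\<close> coincides with the realised expert rewards.\<close>
definition steady_round :: "(nat \<Rightarrow> real) \<Rightarrow> nat \<Rightarrow> bool" where
  "steady_round m t \<longleftrightarrow> batch_start m t < t \<and> m t = m (t - 1)"

lemma unsteady_round_imp_switch:
  assumes "1 \<le> t" "\<not> steady_round m t"
  shows "t = 1 \<or> switch_at m t \<or> switch_at m (t - 1)"
proof (cases "batch_start m t = t")
  case True
  show ?thesis
  proof (cases "t = 1")
    case False
    then obtain u where "t = Suc u" "1 \<le> u" using assms(1) by (cases t) auto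
    with True have "batch_start m u < u \<and> m u \<noteq> m (u - 1)" by (intro batch_start_SucD) auto
    with \<open>t = Suc u\<close> batch_start_ge_1[of m u] show ?thesis by (simp add: switch_at_def)
  qed simp
next
  case False
  with assms batch_start_le[of t m] batch_start_ge_1[of m t] show ?thesis
    by (simp add: steady_round_def switch_at_def)
qed

lemma card_unsteady_rounds_le:
  "card {t\<in>{1..T}. \<not> steady_round m t} \<le> 1 + 2 * num_switches T m"
proof -
  define S where "S = {t\<in>{2..T}. m t \<noteq> m (t - 1)}"
  have "{t\<in>{1..T}. \<not> steady_round m t} \<subseteq> {1} \<union> S \<union> Suc ` S"
  proof
    fix t assume "t \<in> {t\<in>{1..T}. \<not> steady_round m t}"
    then have t: "t \<in> {1..T}" and "t = 1 \<or> switch_at m t \<or> switch_at m (t - 1)"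
      using unsteady_round_imp_switch by auto
    moreover have "t \<in> Suc ` S" if "switch_at m (t - 1)"
    proof
      show "t = Suc (t - 1)" using t by simp
      show "t - 1 \<in> S" using that t by (auto simp: S_def switch_at_def)
    qed
    ultimately show "t \<in> {1} \<union> S \<union> Suc ` S"
      by (auto simp: S_def switch_at_def)
  qed
  then have "card {t\<in>{1..T}. \<not> steady_round m t} \<le> card ({1} \<union> S \<union> Suc ` S)"
    by (intro card_mono) (auto simp: S_def)
  also have "\<dots> \<le> 1 + card S + card (Suc ` S)"
    using card_Un_le[of "{1} \<union> S" "Suc ` S"] card_Un_le[of "{1}" S] by simp
  also have "\<dots> \<le> 1 + 2 * num_switches T m"
    using card_image_le[of S Suc] by (simp add: S_def num_switches_def)
  finally show ?thesis .
qed

definition unit_instance :: "nat \<Rightarrow> (nat \<Rightarrow> real) \<Rightarrow> (nat \<Rightarrow> real) \<Rightarrow> bool" where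
  "unit_instance T v m \<longleftrightarrow> (\<forall>t\<in>{1..T}. v t \<in> {0..1}) \<and> (\<forall>t\<in>{0..T}. m t \<in> {0..1})"

lemma fpa_reward_expert_bid_bounds:
  assumes "0 \<le> v" "v \<le> 1"
  shows "0 \<le> fpa_reward (expert_bid N v i) v x" "fpa_reward (expert_bid N v i) v x \<le> 1"
proof -
  define b where "b = real i / real N"
  have "0 \<le> b" by (simp add: b_def)
  with assms show "0 \<le> fpa_reward (expert_bid N v i) v x" "fpa_reward (expert_bid N v i) v x \<le> 1"
    unfolding fpa_reward_def expert_bid_def b_def[symmetric] by (auto simp: min_def)
qed

definition grid_index :: "nat \<Rightarrow> real \<Rightarrow> nat" where
  "grid_index N x = max 1 (nat \<lceil>x * real N\<rceil>)"

lemma grid_index_in_range: "1 \<le> N \<Longrightarrow> x \<le> 1 \<Longrightarrow> grid_index N x \<in> {1..N}"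
  using mult_left_le_one_le[of "real N" x]
  by (auto simp: grid_index_def ceiling_le_iff mult.commute)

lemma grid_index_bounds:
  assumes "0 < N" "0 \<le> x"
  shows "x \<le> real (grid_index N x) / real N" "real (grid_index N x) / real N \<le> x + 1 / real N"
proof -
  have "real (grid_index N x) = max 1 (of_int \<lceil>x * real N\<rceil>)"
    using assms by (simp add: grid_index_def of_nat_max)
  moreover have "x * real N \<le> of_int \<lceil>x * real N\<rceil>" "of_int \<lceil>x * real N\<rceil> \<le> x * real N + 1"
    by linarith+
  ultimately have "x * real N \<le> real (grid_index N x)" "real (grid_index N x) \<le> x * real N + 1"
    using assms by (auto simp: max_def)
  then show "x \<le> real (grid_index N x) / real N" "real (grid_index N x) / real N \<le> x + 1 / real N"
    using assms by (simp_all add: field_simps)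
qed

lemma fpa_reward_grid_index_ge:
  assumes "0 < N" "0 \<le> x"
  shows "max (v - x) 0 - 1 / real N \<le> fpa_reward (expert_bid N v (grid_index N x)) v x"
  using grid_index_bounds[OF assms]
  by (auto simp: fpa_reward_def expert_bid_def min_def max_def)

definition expert_reward :: "nat \<Rightarrow> (nat \<Rightarrow> real) \<Rightarrow> (nat \<Rightarrow> real) \<Rightarrow> nat \<Rightarrow> nat \<Rightarrow> real" where
  "expert_reward N v m s i = fpa_reward (expert_bid N (v s) i) (v s) (m s)"

definition batch_reward :: "nat \<Rightarrow> (nat \<Rightarrow> real) \<Rightarrow> (nat \<Rightarrow> real) \<Rightarrow> nat \<Rightarrow> nat \<Rightarrow> real" where
  "batch_reward N v m t i = (\<Sum>s\<in>{batch_start m t..t}. expert_reward N v m s i)"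

definition potential :: "nat \<Rightarrow> (nat \<Rightarrow> real) \<Rightarrow> (nat \<Rightarrow> real) \<Rightarrow> nat \<Rightarrow> real" where
  "potential N v m t = ln (\<Sum>i\<in>{1..N}. exp (batch_reward N v m t i))
     - batch_reward N v m t (grid_index N (m (batch_start m t)))"

lemma expert_reward_bounds:
  assumes "unit_instance T v m" "s \<in> {1..T}"
  shows "0 \<le> expert_reward N v m s i" "expert_reward N v m s i \<le> 1"
  using assms fpa_reward_expert_bid_bounds[of "v s" N i "m s"]
  by (auto simp: unit_instance_def expert_reward_def)

lemma batch_reward_nonneg:
  assumes "unit_instance T v m" "t \<le> T"
  shows "0 \<le> batch_reward N v m t i"
  unfolding batch_reward_def
proof (rule sum_nonneg)
  fix s assume "s \<in> {batch_start m t..t}"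
  with assms(2) batch_start_ge_1[of m t] have "s \<in> {1..T}" by auto
  with assms(1) show "0 \<le> expert_reward N v m s i" by (rule expert_reward_bounds)
qed

lemma batch_reward_pred:
  assumes "batch_start m t < t"
  shows "batch_reward N v m t i = batch_reward N v m (t - 1) i + expert_reward N v m t i"
proof -
  have "{batch_start m t..t} = insert t {batch_start m t..t - 1}"
    using assms by auto
  then show ?thesis
    using assms unfolding batch_reward_def batch_start_pred[OF assms] by simp
qed

lemma aromd_weight_steady:
  assumes "1 \<le> t" "m t = m (t - 1)"
  shows "aromd_weight N 1 v m t i = exp (batch_reward N v m t i)"
proof -
  have "{batch_start m t..t} = insert t {batch_start m t..<t}"
    using batch_start_le[OF assms(1)] by auto
  with assms(2) show ?thesis
    by (simp add: aromd_weight_def batch_reward_def expert_reward_def)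
qed

lemma aromd_exp_reward_nonneg:
  assumes "unit_instance T v m" "t \<in> {1..T}"
  shows "0 \<le> aromd_exp_reward N \<eta> v m t"
  using expert_reward_bounds(1)[OF assms, of N]
  unfolding aromd_exp_reward_def aromd_prob_def aromd_weight_def expert_reward_def
  by (intro sum_nonneg mult_nonneg_nonneg divide_nonneg_nonneg) auto

lemma potential_0: "potential N v m 0 = ln (real N)"
  by (simp add: potential_def batch_reward_def batch_start.simps)

lemma potential_nonneg:
  assumes "unit_instance T v m" "1 \<le> N" "1 \<le> T" "t \<le> T"
  shows "0 \<le> potential N v m t"
proof -
  have "batch_start m t \<le> T"
    using assms(3,4) batch_start_le[of t m] by (cases "t = 0") (auto simp: batch_start.simps)
  then have "m (batch_start m t) \<le> 1"
    using assms(1) by (auto simp: unit_instance_def)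
  with assms(2) have "grid_index N (m (batch_start m t)) \<in> {1..N}"
    by (rule grid_index_in_range)
  then show ?thesis
    unfolding potential_def using ln_sum_exp_ge[of "{1..N}"] by fastforce
qed

lemma potential_le_pred:
  assumes "unit_instance T v m" "1 \<le> N" "t \<in> {1..T}"
  shows "potential N v m t \<le> potential N v m (t - 1) + 1 + ln (real N)"
proof (cases "batch_start m t = t")
  case True
  have "batch_reward N v m t i \<le> 0 + 1" for i
    using True expert_reward_bounds(2)[OF assms(1,3)] by (simp add: batch_reward_def)
  then have "ln (\<Sum>i\<in>{1..N}. exp (batch_reward N v m t i)) \<le> ln (\<Sum>i\<in>{1..N}. exp 0) + 1"
    using assms(2) by (intro ln_sum_exp_mono_add) auto
  moreover have "0 \<le> batch_reward N v m t (grid_index N (m (batch_start m t)))"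
    using assms(3) by (intro batch_reward_nonneg[OF assms(1)]) simp
  ultimately have "potential N v m t \<le> ln (real N) + 1"
    by (simp add: potential_def)
  moreover have "0 \<le> potential N v m (t - 1)"
    using assms(3) by (intro potential_nonneg[OF assms(1,2)]) auto
  ultimately show ?thesis by simp
next
  case False
  then have before: "batch_start m t < t"
    using assms(3) batch_start_le[of t m] by simp
  have "ln (\<Sum>i\<in>{1..N}. exp (batch_reward N v m t i))
      \<le> ln (\<Sum>i\<in>{1..N}. exp (batch_reward N v m (t - 1) i)) + 1"
    using assms(2) expert_reward_bounds(2)[OF assms(1,3)]
    by (intro ln_sum_exp_mono_add) (auto simp: batch_reward_pred[OF before])
  moreover have "0 \<le> expert_reward N v m t (grid_index N (m (batch_start m t)))" "0 \<le> ln (real N)"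
    using expert_reward_bounds(1)[OF assms(1,3)] assms(2) by auto
  ultimately show ?thesis
    unfolding potential_def batch_start_pred[OF before] batch_reward_pred[OF before] by simp
qed

lemma steady_round_regret_le:
  assumes "unit_instance T v m" "1 \<le> N" "t \<in> {1..T}" "steady_round m t"
  shows "max (v t - m t) 0 - aromd_exp_reward N 1 v m t
    \<le> 1 / real N + potential N v m (t - 1) - potential N v m t"
proof -
  from assms(4) have before: "batch_start m t < t" and same_bid: "m t = m (t - 1)"
    by (auto simp: steady_round_def)
  define F where "F = batch_reward N v m t"
  define c where "c = grid_index N (m (batch_start m t))"
  have "m t = m (batch_start m t)"
    using batch_start_const[of m t "t - 1"] before same_bid by simp
  moreover have "0 \<le> m t"
    using assms(1,3) by (auto simp: unit_instance_def)
  ultimately have comparator: "max (v t - m t) 0 - 1 / real N \<le> expert_reward N v m t c"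
    using fpa_reward_grid_index_ge[of N "m t" "v t"] assms(2)
    by (simp add: c_def expert_reward_def)
  have "aromd_weight N 1 v m t i = exp (F i)" for i
    unfolding F_def using assms(3) by (intro aromd_weight_steady same_bid) simp
  then have "aromd_exp_reward N 1 v m t
      = (\<Sum>i\<in>{1..N}. exp (F i) / (\<Sum>j\<in>{1..N}. exp (F j)) * expert_reward N v m t i)"
    by (simp add: aromd_exp_reward_def aromd_prob_def expert_reward_def)
  then have "ln (\<Sum>i\<in>{1..N}. exp (F i)) - aromd_exp_reward N 1 v m t
      \<le> ln (\<Sum>i\<in>{1..N}. exp (batch_reward N v m (t - 1) i))"
    using ln_sum_exp_sub_mean_le[of "{1..N}" F "expert_reward N v m t"] assms(2)
    by (simp add: F_def batch_reward_pred[OF before])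
  with comparator show ?thesis
    unfolding potential_def batch_start_pred[OF before] F_def c_def batch_reward_pred[OF before]
    by simp
qed

lemma round_regret_le:
  assumes "unit_instance T v m" "1 \<le> N" "t \<in> {1..T}"
  shows "max (v t - m t) 0 - aromd_exp_reward N 1 v m t
    \<le> 1 / real N + (potential N v m (t - 1) - potential N v m t)
      + (2 + ln (real N)) * of_bool (\<not> steady_round m t)"
proof (cases "steady_round m t")
  case True
  then show ?thesis using steady_round_regret_le[OF assms] by simp
next
  case False
  have "v t \<le> 1" "0 \<le> m t"
    using assms(1,3) by (auto simp: unit_instance_def)
  then have "max (v t - m t) 0 - aromd_exp_reward N 1 v m t \<le> 1"
    using aromd_exp_reward_nonneg[OF assms(1,3), of N 1] by simp
  moreover have "0 \<le> 1 / real N"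
    by simp
  moreover have "(2 + ln (real N)) * of_bool (\<not> steady_round m t) = 2 + ln (real N)"
    using False by simp
  ultimately show ?thesis
    using potential_le_pred[OF assms] by linarith
qed

lemma aromd_dyn_regret_le:
  assumes "unit_instance T v m" "1 \<le> N" "1 \<le> T"
  shows "aromd_dyn_regret N 1 T v m
    \<le> real T / real N + ln (real N) + (2 + ln (real N)) * (1 + 2 * real (num_switches T m))"
proof -
  define K where "K = 2 + ln (real N)"
  have telescope: "(\<Sum>t=1..n. potential N v m (t - 1) - potential N v m t)
      = potential N v m 0 - potential N v m n" for n
    by (induction n) simp_all
  have "aromd_dyn_regret N 1 T v m = (\<Sum>t=1..T. max (v t - m t) 0 - aromd_exp_reward N 1 v m t)"
    by (simp add: aromd_dyn_regret_def sum_subtractf)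
  also have "\<dots> \<le> (\<Sum>t=1..T. 1 / real N + (potential N v m (t - 1) - potential N v m t)
      + K * of_bool (\<not> steady_round m t))"
    unfolding K_def by (intro sum_mono round_regret_le[OF assms(1,2)])
  also have "\<dots> = real T / real N + (potential N v m 0 - potential N v m T)
      + K * real (card {t\<in>{1..T}. \<not> steady_round m t})"
    unfolding sum.distrib telescope by (simp add: sum_distrib_left[symmetric] Int_def conj_commute)
  also have "\<dots> \<le> real T / real N + ln (real N) + K * (1 + 2 * real (num_switches T m))"
  proof -
    have "real (card {t\<in>{1..T}. \<not> steady_round m t}) \<le> 1 + 2 * real (num_switches T m)"
      using of_nat_mono[OF card_unsteady_rounds_le[of T m]] by simp
    moreover have "0 \<le> K"
      using assms(2) by (simp add: K_def)
    ultimately have "K * real (card {t\<in>{1..T}. \<not> steady_round m t})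
        \<le> K * (1 + 2 * real (num_switches T m))"
      by (rule mult_left_mono)
    then show ?thesis
      using potential_nonneg[OF assms order_refl] by (simp add: potential_0)
  qed
  finally show ?thesis by (simp add: K_def)
qed

lemma aromd_dyn_regret_le_log:
  assumes "in_switch_class T L v m" "3 \<le> T"
  shows "aromd_dyn_regret T 1 T v m \<le> 11 * ln (real T) * max L 1"
proof -
  define l where "l = ln (real T)"
  define M where "M = max L 1"
  have "exp 1 \<le> real T"
    using exp_le assms(2) by linarith
  then have "1 \<le> l"
    using assms(2) by (simp add: l_def ln_ge_iff)
  have "1 + 2 * real (num_switches T m) \<le> 3 * M"
    using assms(1) by (auto simp: in_switch_class_def M_def)
  then have "(2 + l) * (1 + 2 * real (num_switches T m)) \<le> (3 * l) * (3 * M)"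
    using \<open>1 \<le> l\<close> by (intro mult_mono) auto
  then have "(2 + l) * (1 + 2 * real (num_switches T m)) \<le> 9 * (l * M)"
    by simp
  moreover have "l \<le> l * M"
    using \<open>1 \<le> l\<close> mult_left_mono[of 1 M l] by (simp add: M_def)
  moreover have "aromd_dyn_regret T 1 T v m \<le> 1 + l + (2 + l) * (1 + 2 * real (num_switches T m))"
    using aromd_dyn_regret_le[of T v m T] assms by (simp add: in_switch_class_def unit_instance_def l_def)
  ultimately have "aromd_dyn_regret T 1 T v m \<le> 11 * (l * M)"
    using \<open>1 \<le> l\<close> by linarith
  then show ?thesis
    by (simp add: l_def M_def mult.assoc)
qed

theorem theorem2:
  shows "\<exists>(N :: nat \<Rightarrow> nat) (\<eta> :: nat \<Rightarrow> real).
           (\<forall>T. N T \<ge> 1 \<and> \<eta> T > 0) \<and>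
           (\<forall>L :: nat \<Rightarrow> real. (\<forall>T. L T \<ge> 0) \<longrightarrow> L \<in> o(\<lambda>T. real T) \<longrightarrow>
              (\<exists>(C :: real) (k :: nat). eventually (\<lambda>T.
                 \<forall>v m. in_switch_class T (L T) v m \<longrightarrow>
                   aromd_dyn_regret (N T) (\<eta> T) T v m \<le> C * (ln (real T)) ^ k * max (L T) 1)
               at_top))"
  \<comment> \<open>The bound holds for every budget \<open>L\<close>.\<close>
proof (intro exI[of _ "\<lambda>T. max 1 T"] exI[of _ "\<lambda>_. 1"] conjI allI impI)
  fix L :: "nat \<Rightarrow> real"
  have "eventually (\<lambda>T. \<forall>v m. in_switch_class T (L T) v m \<longrightarrow>
      aromd_dyn_regret (max 1 T) 1 T v m \<le> 11 * (ln (real T)) ^ 1 * max (L T) 1) at_top"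
    using eventually_ge_at_top[of 3]
    by eventually_elim (simp add: aromd_dyn_regret_le_log max_absorb2)
  then show "\<exists>(C :: real) (k :: nat). eventually (\<lambda>T. \<forall>v m. in_switch_class T (L T) v m \<longrightarrow>
      aromd_dyn_regret (max 1 T) 1 T v m \<le> C * (ln (real T)) ^ k * max (L T) 1) at_top"
    by blast
qed simp_all

end
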